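(* Let $B\ge1$, $G=\{0,\frac1B,\dots,1\}$, $t\in G$ and $\eta\in(0,t)$. For each $r<0$ there exists $f^*\in\mathcal F_{r,\eta}$ with $\mathcal T_t(f^* )=\sup_{f\in\mathcal F_{r,\eta}}\mathcal T_t(f)$.
   Context: Identify a probability mass function $f$ on $G$ with $(f_0,\dots,f_B)$, $f_i=f(i/B)$; let $\mathcal T_t(f)=\sum_{i\ge Bt}f_i$ and $\mathcal E(f)=\sum_{i=1}^B\frac iBf_i$. For $r<0$, $a,b\ge0$, $\lambda\in(0,1)$, let $M_r(a,b;\lambda)=\{(1-\lambda)a^r+\lambda b^r\}^{1/r}$ if $ab>0$ and $0$ if $ab=0$. A non-negative function $g$ on an interval is $r$-concave if $g((1-\lambda)x+\lambda y)\ge M_r(g(x),g(y);\lambda)$ for all $x,y$, $\lambda\in(0,1)$ (for $r<0$ this is equivalent to $g^r$ being convex, with $0^r=\infty$). A probability mass function $f$ on $G$ is $r$-concave if the linear interpolant to $\{(i,f_i):i=0,\dots,B\}$ is $r$-concave on $[0,B]$. $\mathcal F_r$ denotes the set of $r$-concave probability mass functions on $G$ and $\mathcal F_{r,\eta}=\{f\in\mathcal F_r:\mathcal E(f)\le\eta\}$. *)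

theory Defs
  imports Complex_Main
begin

definition grid :: "nat \<Rightarrow> real set" where
  "grid B = {real i / real B | i. i \<le> B}"

text \<open>A probability mass function on G, identified with (f 0, ..., f B);
  values beyond B are fixed to 0 so that f is determined by the vector.\<close>
definition is_pmf :: "nat \<Rightarrow> (nat \<Rightarrow> real) \<Rightarrow> bool" where
  "is_pmf B f \<longleftrightarrow> (\<forall>i\<le>B. 0 \<le> f i) \<and> (\<Sum>i\<le>B. f i) = 1 \<and> (\<forall>i>B. f i = 0)"

definition tail :: "nat \<Rightarrow> real \<Rightarrow> (nat \<Rightarrow> real) \<Rightarrow> real" where
  "tail B t f = (\<Sum>i\<in>{i. i \<le> B \<and> real B * t \<le> real i}. f i)"

definition mean :: "nat \<Rightarrow> (nat \<Rightarrow> real) \<Rightarrow> real" where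
  "mean B f = (\<Sum>i=1..B. (real i / real B) * f i)"

definition Mr :: "real \<Rightarrow> real \<Rightarrow> real \<Rightarrow> real \<Rightarrow> real" where
  "Mr r a b l = (if a * b > 0 then ((1 - l) * a powr r + l * b powr r) powr (1 / r) else 0)"

definition r_concave_on :: "real \<Rightarrow> real set \<Rightarrow> (real \<Rightarrow> real) \<Rightarrow> bool" where
  "r_concave_on r S g \<longleftrightarrow> (\<forall>x\<in>S. 0 \<le> g x) \<and>
     (\<forall>x\<in>S. \<forall>y\<in>S. \<forall>l. 0 < l \<and> l < 1 \<longrightarrow> Mr r (g x) (g y) l \<le> g ((1 - l) * x + l * y))"

text \<open>Linear interpolant of the points (i, f i), i = 0..B, evaluated on [0,B].\<close>
definition interp :: "(nat \<Rightarrow> real) \<Rightarrow> real \<Rightarrow> real" where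
  "interp f x = (let k = nat \<lfloor>x\<rfloor> in (1 - (x - real k)) * f k + (x - real k) * f (Suc k))"

definition Fr :: "nat \<Rightarrow> real \<Rightarrow> (nat \<Rightarrow> real) set" where
  "Fr B r = {f. is_pmf B f \<and> r_concave_on r {0..real B} (interp f)}"

definition Fr_eta :: "nat \<Rightarrow> real \<Rightarrow> real \<Rightarrow> (nat \<Rightarrow> real) set" where
  "Fr_eta B r \<eta> = {f \<in> Fr B r. mean B f \<le> \<eta>}"

end

theory Submission
  imports Defs "HOL-Analysis.Analysis"
begin

text \<open>Viewed as a subset of \<open>\<real>\<^sup>\<nat>\<close> with the product topology, the class
  \<open>\<F>\<^sub>r\<^sub>,\<^sub>\<eta>\<close> is compact: it is a closed subset of the compact box of
  probability vectors, because the mean constraint is continuous and the \<open>r\<close>-concavity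
  inequality survives pointwise limits (\<open>M\<^sub>r\<close> is continuous where both arguments are
  positive and vanishes otherwise). It is nonempty, as it contains the point mass at \<open>0\<close>:
  its interpolant \<open>(1 - x)\<^sub>+\<close> is concave on its support, and for \<open>r < 0\<close> the power
  mean \<open>M\<^sub>r\<close> is dominated by the arithmetic mean. Hence the continuous functional
  \<open>\<T>\<^sub>t\<close> attains its supremum on it.\<close>

lemma convex_on_powr_nonpos:
  assumes "p \<le> 0" shows "convex_on {0<..} (\<lambda>x::real. x powr p)"
proof (rule convex_on_realI)
  show "\<And>x. x \<in> {0<..} \<Longrightarrow> ((\<lambda>x. x powr p) has_real_derivative p * x powr (p - 1)) (at x)"
    by (rule has_real_derivative_powr) simp
  fix x y :: real assume "x \<in> {0<..}" "y \<in> {0<..}" "x \<le> y"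
  then have "y powr (p - 1) \<le> x powr (p - 1)" using assms by (intro powr_mono2') auto
  then show "p * x powr (p - 1) \<le> p * y powr (p - 1)" using assms by (simp add: mult_left_mono_neg)
qed auto

lemma Mr_le_arith_mean:
  assumes "r < 0" "0 \<le> a" "0 \<le> b" "0 < l" "l < 1"
  shows "Mr r a b l \<le> (1 - l) * a + l * b"
proof (cases "a * b > 0")
  case True
  then have "0 < a" "0 < b" using assms by (auto simp: zero_less_mult_iff)
  have powr_convex: "convex_on {0<..} (\<lambda>x::real. x powr (1/r))"
    by (rule convex_on_powr_nonpos) (use assms in \<open>simp add: divide_simps\<close>)
  then have "((1 - l) * a powr r + l * b powr r) powr (1/r)
      \<le> (1 - l) * (a powr r) powr (1/r) + l * (b powr r) powr (1/r)"
    using convex_onD[OF powr_convex, of l "a powr r" "b powr r"] \<open>0 < a\<close> \<open>0 < b\<close> assms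
    by (simp add: algebra_simps)
  also have "\<dots> = (1 - l) * a + l * b" using \<open>0 < a\<close> \<open>0 < b\<close> assms by (simp add: powr_powr)
  finally show ?thesis using True by (simp add: Mr_def)
qed (use assms in \<open>simp add: Mr_def\<close>)

lemma r_concave_onI_concave_on_support:
  fixes g :: "real \<Rightarrow> real"
  assumes "r < 0" "convex S" and nonneg: "\<And>x. x \<in> S \<Longrightarrow> 0 \<le> g x"
    and "concave_on P g" and support: "\<And>x. x \<in> S \<Longrightarrow> 0 < g x \<Longrightarrow> x \<in> P"
  shows "r_concave_on r S g"
  unfolding r_concave_on_def
proof (intro conjI ballI allI impI)
  fix x y l :: real assume x: "x \<in> S" and y: "y \<in> S" and l: "0 < l \<and> l < 1"
  show "Mr r (g x) (g y) l \<le> g ((1 - l) * x + l * y)"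
  proof (cases "g x * g y > 0")
    case True
    then have "x \<in> P" "y \<in> P"
      using nonneg x y support by (auto simp: zero_less_mult_iff less_le)
    have "Mr r (g x) (g y) l \<le> (1 - l) * g x + l * g y"
      using assms x y l by (intro Mr_le_arith_mean) auto
    also have "\<dots> \<le> g ((1 - l) * x + l * y)"
      using concave_onD[OF \<open>concave_on P g\<close>, of l x y] \<open>x \<in> P\<close> \<open>y \<in> P\<close> l by simp
    finally show ?thesis .
  next
    case False
    have "(1 - l) * x + l * y \<in> S"
      using convexD[OF \<open>convex S\<close> x y, of "1 - l" l] l by simp
    then show ?thesis using False nonneg by (simp add: Mr_def)
  qed
qed (use nonneg in auto)

definition point_mass_0 :: "nat \<Rightarrow> real" where
  "point_mass_0 i = (if i = 0 then 1 else 0)"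

lemma interp_point_mass_0:
  assumes "0 \<le> x" shows "interp point_mass_0 x = (if x < 1 then 1 - x else 0)"
proof -
  have "nat \<lfloor>x\<rfloor> = 0 \<longleftrightarrow> x < 1" using assms by linarith
  then show ?thesis by (auto simp: interp_def point_mass_0_def Let_def)
qed

lemma concave_on_interp_point_mass_0: "concave_on {0..<1} (interp point_mass_0)"
proof (rule concave_on_linorderI)
  fix l x y :: real assume l: "0 < l" "l < 1" and xy: "x \<in> {0..<1}" "y \<in> {0..<1}"
  then have "(1 - l) * x + l * y \<in> {0..<1}"
    using convexD[of "{0..<1::real}" x y "1 - l" l] by simp
  then show "(1 - l) * interp point_mass_0 x + l * interp point_mass_0 y
      \<le> interp point_mass_0 ((1 - l) *\<^sub>R x + l *\<^sub>R y)"
    using xy by (simp add: interp_point_mass_0 algebra_simps)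
qed simp

lemma r_concave_on_interp_point_mass_0:
  assumes "r < 0" shows "r_concave_on r {0..real B} (interp point_mass_0)"
  by (intro r_concave_onI_concave_on_support[OF assms _ _ concave_on_interp_point_mass_0])
    (auto simp: interp_point_mass_0 split: if_splits)

lemma point_mass_0_in_Fr_eta:
  assumes "0 \<le> \<eta>" "r < 0"
  shows "point_mass_0 \<in> Fr_eta B r \<eta>"
proof -
  have "is_pmf B point_mass_0"
    unfolding is_pmf_def point_mass_0_def by (simp add: sum.delta)
  moreover have "mean B point_mass_0 = 0"
    unfolding mean_def point_mass_0_def by simp
  ultimately show ?thesis
    using assms r_concave_on_interp_point_mass_0 by (simp add: Fr_eta_def Fr_def)
qed

lemma tendsto_coordinate:
  fixes x :: "'a \<Rightarrow> 'b \<Rightarrow> 'c::topological_space"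
  assumes "(x \<longlongrightarrow> l) F" shows "((\<lambda>n. x n i) \<longlongrightarrow> l i) F"
  using continuous_on_tendsto_compose[OF continuous_on_product_coordinates assms] by simp

lemma interp_tendsto:
  assumes "(x \<longlongrightarrow> f) F" shows "((\<lambda>n. interp (x n) z) \<longlongrightarrow> interp f z) F"
  unfolding interp_def Let_def by (intro tendsto_intros tendsto_coordinate[OF assms])

lemma Mr_nonneg: "0 \<le> Mr r a b l"
  by (simp add: Mr_def)

lemma Mr_le_of_tendsto:
  assumes a: "(a \<longlongrightarrow> a0) F" and b: "(b \<longlongrightarrow> b0) F" and c: "(c \<longlongrightarrow> c0) F" and "F \<noteq> bot"
    and le: "\<forall>\<^sub>F n in F. 0 \<le> a n \<and> 0 \<le> b n \<and> Mr r (a n) (b n) l \<le> c n"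
    and l: "0 \<le> l" "l \<le> 1"
  shows "Mr r a0 b0 l \<le> c0"
proof (cases "a0 * b0 > 0")
  case True
  have "0 \<le> a0" "0 \<le> b0"
    using tendsto_lowerbound[OF a _ \<open>F \<noteq> bot\<close>] tendsto_lowerbound[OF b _ \<open>F \<noteq> bot\<close>]
      eventually_mono[OF le] by auto
  with True have "0 < a0" "0 < b0" by (auto simp: zero_less_mult_iff)
  then have "0 < (1 - l) * a0 powr r + l * b0 powr r"
    using l by (cases "l = 0") (auto intro: add_pos_nonneg add_nonneg_pos)
  then have "((\<lambda>n. ((1 - l) * a n powr r + l * b n powr r) powr (1/r))
      \<longlongrightarrow> ((1 - l) * a0 powr r + l * b0 powr r) powr (1/r)) F"
    using \<open>0 < a0\<close> \<open>0 < b0\<close> by (intro tendsto_powr tendsto_intros a b) auto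
  moreover have "\<forall>\<^sub>F n in F. ((1 - l) * a n powr r + l * b n powr r) powr (1/r) \<le> c n"
    using le order_tendstoD(1)[OF a \<open>0 < a0\<close>] order_tendstoD(1)[OF b \<open>0 < b0\<close>]
    by eventually_elim (simp add: Mr_def)
  ultimately show ?thesis
    using True tendsto_le[OF \<open>F \<noteq> bot\<close> c] by (simp add: Mr_def)
next
  case False
  have "\<forall>\<^sub>F n in F. 0 \<le> c n"
    using le by eventually_elim (meson Mr_nonneg order_trans)
  then have "0 \<le> c0"
    by (rule tendsto_lowerbound[OF c _ \<open>F \<noteq> bot\<close>])
  with False show ?thesis by (simp add: Mr_def)
qed

lemma closed_r_concave_interp: "closed {f. r_concave_on r S (interp f)}"
  unfolding closed_sequential_limits
proof (intro allI impI, elim conjE)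
  fix x f assume rc: "\<forall>n. x n \<in> {f. r_concave_on r S (interp f)}" and lim: "x \<longlonglongrightarrow> f"
  show "f \<in> {f. r_concave_on r S (interp f)}"
    unfolding mem_Collect_eq r_concave_on_def
  proof (intro conjI ballI allI impI)
    fix z assume "z \<in> S" then show "0 \<le> interp f z"
      using rc by (intro LIMSEQ_le_const[OF interp_tendsto[OF lim]]) (auto simp: r_concave_on_def)
  next
    fix z y l :: real assume zy: "z \<in> S" "y \<in> S" and l: "0 < l \<and> l < 1"
    have "\<forall>n. 0 \<le> interp (x n) z \<and> 0 \<le> interp (x n) y
        \<and> Mr r (interp (x n) z) (interp (x n) y) l \<le> interp (x n) ((1 - l) * z + l * y)"
      using rc zy l by (simp add: r_concave_on_def)
    then show "Mr r (interp f z) (interp f y) l \<le> interp f ((1 - l) * z + l * y)"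
      using l by (intro Mr_le_of_tendsto[OF interp_tendsto[OF lim] interp_tendsto[OF lim]
          interp_tendsto[OF lim] trivial_limit_sequentially] always_eventually) simp_all
  qed
qed

lemma continuous_on_mean: "continuous_on UNIV (mean B)"
  unfolding mean_def by (intro continuous_intros continuous_on_product_coordinates)

lemma continuous_on_tail: "continuous_on UNIV (tail B t)"
  unfolding tail_def by (intro continuous_intros continuous_on_product_coordinates)

lemma closed_pmfs: "closed {f. is_pmf B f}"
  unfolding is_pmf_def
  by (intro closed_Collect_conj closed_Collect_all closed_Collect_imp open_Collect_const
      closed_Collect_le closed_Collect_eq continuous_intros continuous_on_product_coordinates)

lemma pmfs_subset_box: "{f. is_pmf B f} \<subseteq> (\<Pi>\<^sub>E i\<in>UNIV. if i \<le> B then {0..1} else {0})"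
proof safe
  fix f i assume f: "is_pmf B f"
  show "f i \<in> (if i \<le> B then {0..1} else {0})"
  proof (cases "i \<le> B")
    case True
    then have "f i \<le> (\<Sum>j\<le>B. f j)"
      using f by (intro member_le_sum) (auto simp: is_pmf_def)
    then show ?thesis using f True by (simp add: is_pmf_def)
  qed (use f in \<open>simp add: is_pmf_def\<close>)
qed simp

lemma compact_pmfs: "compact {f. is_pmf B f}"
proof -
  let ?box = "\<Pi>\<^sub>E i\<in>UNIV. if i \<le> B then {0..1::real} else {0}"
  have "compactin (product_topology (\<lambda>i. euclidean) UNIV) ?box"
    unfolding compactin_PiE by auto
  then have "compact ?box"
    by (simp add: euclidean_product_topology)
  then have "compact (?box \<inter> {f. is_pmf B f})"
    using closed_pmfs by (rule compact_Int_closed)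
  then show ?thesis
    using pmfs_subset_box by (simp add: Int_absorb1)
qed

lemma compact_Fr_eta: "compact (Fr_eta B r \<eta>)"
proof -
  have "Fr_eta B r \<eta> = {f. is_pmf B f} \<inter> {f. r_concave_on r {0..real B} (interp f)} \<inter> {f. mean B f \<le> \<eta>}"
    by (auto simp: Fr_eta_def Fr_def)
  then show ?thesis
    using closed_r_concave_interp closed_Collect_le[OF continuous_on_mean continuous_on_const]
    by (simp add: compact_Int_closed compact_pmfs)
qed

theorem lemma3:
  fixes B :: nat and t \<eta> r :: real
  assumes "B \<ge> 1" and "t \<in> grid B" and "0 < \<eta>" and "\<eta> < t" and "r < 0"
  shows "\<exists>f\<in>Fr_eta B r \<eta>. tail B t f = Sup (tail B t ` Fr_eta B r \<eta>)"
  \<comment> \<open>Existence needs only \<open>0 \<le> \<eta>\<close> and \<open>r < 0\<close>.\<close>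
proof -
  have "compact (tail B t ` Fr_eta B r \<eta>)"
    by (rule compact_continuous_image[OF continuous_on_subset[OF continuous_on_tail subset_UNIV]
          compact_Fr_eta])
  moreover have "tail B t ` Fr_eta B r \<eta> \<noteq> {}"
    using point_mass_0_in_Fr_eta[of \<eta> r B] assms by auto
  ultimately obtain s where max: "s \<in> tail B t ` Fr_eta B r \<eta>" "\<forall>y \<in> tail B t ` Fr_eta B r \<eta>. y \<le> s"
    using compact_attains_sup by blast
  then have "Sup (tail B t ` Fr_eta B r \<eta>) = s"
    by (intro cSup_eq_maximum) auto
  then show ?thesis
    using max(1) by auto
qed

end
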